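(* Let $d,b\ge1$, $M=2^b$, $\varepsilon>0$. Let $P_{U^M}$ be a rotationally symmetric codebook-generating distribution and $f$ an unbiased random encoder satisfying $\varepsilon$-LDP with respect to $P_{U^M}$ (with the selecting decoder). Then there exists a random encoder $f_2$ such that $\mathrm{Err}(f,P_{U^M})\ge\mathrm{Err}(f_2,P_{U^M})$ and $D(v,f_2,P_{U^M})=D(v',f_2,P_{U^M})$ for all $v,v'\in\mathbb{S}^{d-1}$.
   Context: $\mathbb{S}^{d-1}$ is the unit sphere in $\mathbb{R}^d$, $[M]=\{1,\dots,M\}$. The server and user share a random codebook $U^M=(U_1,\dots,U_M)\in(\mathbb{R}^d)^M$ with distribution $P_{U^M}$; the user's random encoder $f:\mathbb{S}^{d-1}\times(\mathbb{R}^d)^M\to[M]$ has transition probabilities $Q_f(m\mid v,u^M)$, and the server decodes message $m$ as $U_m$. The encoder is $\varepsilon$-LDP if $Q_f(m\mid v,u^M)\le e^\varepsilon Q_f(m\mid v',u^M)$ for all $v,v'\in\mathbb{S}^{d-1}$, $m\in[M]$ and $P_{U^M}$-almost all $u^M$; it is unbiased if $\mathbb{E}_{P_{U^M}}[\sum_{m=1}^M U_mQ_f(m\mid v,U^M)]=v$ for all $v\in\mathbb{S}^{d-1}$. Its error at $v$ is $D(v,f,P_{U^M})=\mathbb{E}_{P_{U^M}}[\sum_{m=1}^M\|U_m-v\|_2^2Q_f(m\mid v,U^M)]$, and $\mathrm{Err}(f,P_{U^M})=\sup_{v\in\mathbb{S}^{d-1}}D(v,f,P_{U^M})$. $P_{U^M}$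 is rotationally symmetric if $(U_1,\dots,U_M)$ and $(A_0U_1,\dots,A_0U_M)$ have the same distribution for every $d\times d$ orthogonal matrix $A_0$. *)

theory Defs
  imports "HOL-Probability.Probability"
begin

text \<open>Codebooks U^M are functions from a finite index type 'm (with CARD('m) = M)
  to R^d (= real^'d). The codebook space carries the product Borel sigma-algebra.\<close>

definition codebook_space :: "('m::finite \<Rightarrow> real^'d) measure" where
  "codebook_space = PiM UNIV (\<lambda>_. borel)"

definition codebook_dist :: "('m::finite \<Rightarrow> real^'d) measure \<Rightarrow> bool" where
  "codebook_dist P \<longleftrightarrow> prob_space P \<and> sets P = sets codebook_space"

definition rot_symmetric :: "('m::finite \<Rightarrow> real^'d) measure \<Rightarrow> bool" where
  "rot_symmetric P \<longleftrightarrow> (\<forall>A::real^'d^'d. orthogonal_matrix A \<longrightarrow>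
      distr P codebook_space (\<lambda>u m. A *v u m) = P)"

text \<open>A random encoder: transition probabilities Q v u m = Q_f(m | v, u^M),
  a probability vector on the messages for every input v on the sphere and codebook u,
  measurable in the codebook.\<close>
definition random_encoder ::
    "(real^'d \<Rightarrow> ('m::finite \<Rightarrow> real^'d) \<Rightarrow> 'm \<Rightarrow> real) \<Rightarrow> bool" where
  "random_encoder Q \<longleftrightarrow>
     (\<forall>v\<in>sphere 0 1. \<forall>u m. 0 \<le> Q v u m) \<and>
     (\<forall>v\<in>sphere 0 1. \<forall>u. (\<Sum>m\<in>UNIV. Q v u m) = 1) \<and>
     (\<forall>v\<in>sphere 0 1. \<forall>m. (\<lambda>u. Q v u m) \<in> borel_measurable codebook_space)"

definition LDP ::
    "real \<Rightarrow> ('m::finite \<Rightarrow> real^'d) measure \<Rightarrow> (real^'d \<Rightarrow> ('m \<Rightarrow> real^'d) \<Rightarrow> 'm \<Rightarrow> real) \<Rightarrow> bool" where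
  "LDP \<epsilon> P Q \<longleftrightarrow> (\<forall>v\<in>sphere 0 1. \<forall>v'\<in>sphere 0 1. \<forall>m.
       AE u in P. Q v u m \<le> exp \<epsilon> * Q v' u m)"

definition unbiased ::
    "('m::finite \<Rightarrow> real^'d) measure \<Rightarrow> (real^'d \<Rightarrow> ('m \<Rightarrow> real^'d) \<Rightarrow> 'm \<Rightarrow> real) \<Rightarrow> bool" where
  "unbiased P Q \<longleftrightarrow> (\<forall>v\<in>sphere 0 1.
       has_bochner_integral P (\<lambda>u. \<Sum>m\<in>UNIV. Q v u m *\<^sub>R u m) v)"

text \<open>Error at v (possibly infinite, hence ennreal) and worst-case error.\<close>
definition err_at ::
    "real^'d \<Rightarrow> (real^'d \<Rightarrow> ('m::finite \<Rightarrow> real^'d) \<Rightarrow> 'm \<Rightarrow> real) \<Rightarrow> ('m \<Rightarrow> real^'d) measure \<Rightarrow> ennreal" where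
  "err_at v Q P = (\<integral>\<^sup>+ u. ennreal (\<Sum>m\<in>UNIV. (norm (u m - v))\<^sup>2 * Q v u m) \<partial>P)"

definition Err ::
    "(real^'d \<Rightarrow> ('m::finite \<Rightarrow> real^'d) \<Rightarrow> 'm \<Rightarrow> real) \<Rightarrow> ('m \<Rightarrow> real^'d) measure \<Rightarrow> ennreal" where
  "Err Q P = (SUP v\<in>sphere 0 1. err_at v Q P)"

end

theory Submission
  imports Defs
begin

text \<open>Fix a unit vector e and, for every v on the sphere, a rotation R_v with R_v e = v.
  The encoder f_2 encodes v by rotating the codebook with R_v^T and running f on the input e.
  Since the codebook distribution is rotation invariant, the error of f_2 at v equals the error
  of f at e, which is bounded by the worst-case error of f.\<close>

definition rotate_codebook :: "real^'d^'d \<Rightarrow> ('m \<Rightarrow> real^'d) \<Rightarrow> 'm \<Rightarrow> real^'d" where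
  "rotate_codebook A u = (\<lambda>m. A *v u m)"

definition rotation_to :: "real^'d \<Rightarrow> real^'d \<Rightarrow> real^'d^'d" where
  "rotation_to e v = (SOME A. orthogonal_matrix A \<and> A *v e = v)"

definition transported_encoder ::
    "real^'d \<Rightarrow> (real^'d \<Rightarrow> ('m \<Rightarrow> real^'d) \<Rightarrow> 'm \<Rightarrow> real) \<Rightarrow> real^'d \<Rightarrow> ('m \<Rightarrow> real^'d) \<Rightarrow> 'm \<Rightarrow> real"
  where "transported_encoder e Q v u = Q e (rotate_codebook (transpose (rotation_to e v)) u)"

lemma rotation_to:
  fixes e v :: "real^'d"
  assumes "norm e = 1" "norm v = 1"
  shows "orthogonal_matrix (rotation_to e v)" "rotation_to e v *v e = v"
proof -
  obtain f where f: "orthogonal_transformation f" "f e = v"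
    using orthogonal_transformation_exists_1[OF assms] .
  then have "orthogonal_matrix (matrix f) \<and> matrix f *v e = v"
    by (simp add: orthogonal_transformation_matrix orthogonal_transformation_linear)
  then have "orthogonal_matrix (rotation_to e v) \<and> rotation_to e v *v e = v"
    unfolding rotation_to_def by (rule someI)
  then show "orthogonal_matrix (rotation_to e v)" "rotation_to e v *v e = v"
    by simp_all
qed

lemma norm_orthogonal_matrix_mult:
  fixes A :: "real^'n^'n"
  assumes "orthogonal_matrix A"
  shows "norm (A *v x) = norm x"
  using assms orthogonal_transformation_matrix[of "(*v) A"]
  by (simp add: orthogonal_transformation_norm matrix_of_matrix_vector_mul)

lemma transpose_orthogonal_matrix_mult:
  fixes A :: "real^'n^'n"
  assumes "orthogonal_matrix A"
  shows "transpose A *v (A *v x) = x"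
  using assms by (simp add: orthogonal_matrix_def matrix_vector_mul_assoc)

lemma measurable_rotate_codebook:
  "rotate_codebook A \<in> codebook_space \<rightarrow>\<^sub>M (codebook_space :: ('m::finite \<Rightarrow> real^'d) measure)"
  unfolding codebook_space_def rotate_codebook_def
proof (rule measurable_PiM_single')
  fix m :: 'm
  have "(\<lambda>x. A *v x) \<in> borel_measurable borel"
    by (intro borel_measurable_continuous_onI continuous_intros)
  then show "(\<lambda>u. A *v u m) \<in> PiM UNIV (\<lambda>_. borel) \<rightarrow>\<^sub>M borel"
    by (rule measurable_compose[OF measurable_component_singleton, rotated]) simp
qed (simp add: space_PiM)

lemma nn_integral_rotate_codebook:
  fixes P :: "('m::finite \<Rightarrow> real^'d) measure"
  assumes "codebook_dist P" "rot_symmetric P" "orthogonal_matrix A"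
    and g: "g \<in> borel_measurable codebook_space"
  shows "(\<integral>\<^sup>+ u. g (rotate_codebook A u) \<partial>P) = (\<integral>\<^sup>+ u. g u \<partial>P)"
proof -
  have "rotate_codebook A \<in> P \<rightarrow>\<^sub>M codebook_space"
    using assms(1) measurable_rotate_codebook measurable_cong_sets
    unfolding codebook_dist_def by blast
  then have "(\<integral>\<^sup>+ u. g (rotate_codebook A u) \<partial>P) = (\<integral>\<^sup>+ u. g u \<partial>distr P codebook_space (rotate_codebook A))"
    using g by (simp add: nn_integral_distr)
  also have "distr P codebook_space (rotate_codebook A) = P"
    using assms(2,3) by (simp add: rot_symmetric_def rotate_codebook_def[abs_def])
  finally show ?thesis .
qed

lemma random_encoder_transported_encoder:
  fixes Q :: "real^'d \<Rightarrow> ('m::finite \<Rightarrow> real^'d) \<Rightarrow> 'm \<Rightarrow> real"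
  assumes Q: "random_encoder Q" and e: "e \<in> sphere 0 1"
  shows "random_encoder (transported_encoder e Q)"
  unfolding random_encoder_def transported_encoder_def
proof (intro conjI ballI allI)
  fix v :: "real^'d" and m
  show "(\<lambda>u. Q e (rotate_codebook (transpose (rotation_to e v)) u) m) \<in> borel_measurable codebook_space"
    using measurable_compose[OF measurable_rotate_codebook] Q e unfolding random_encoder_def by blast
qed (use Q e in \<open>auto simp: random_encoder_def\<close>)

lemma err_at_transported_encoder:
  fixes P :: "('m::finite \<Rightarrow> real^'d) measure"
  assumes P: "codebook_dist P" "rot_symmetric P"
    and Q: "random_encoder Q" and e: "e \<in> sphere 0 1" and v: "v \<in> sphere 0 1"
  shows "err_at v (transported_encoder e Q) P = err_at e Q P"
proof -
  define A where "A = rotation_to e v"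
  have A: "orthogonal_matrix A" "A *v e = v"
    using rotation_to e v unfolding A_def by simp_all
  define g where "g u = ennreal (\<Sum>m\<in>UNIV. (norm (u m - v))\<^sup>2 * Q e (rotate_codebook (transpose A) u) m)"
    for u :: "'m \<Rightarrow> real^'d"
  have g: "g \<in> borel_measurable codebook_space"
  proof -
    have "(\<lambda>u. u m) \<in> borel_measurable codebook_space" for m :: 'm
      unfolding codebook_space_def by (rule measurable_component_singleton) simp
    moreover have "(\<lambda>u. Q e (rotate_codebook (transpose A) u) m) \<in> borel_measurable codebook_space" for m
      using measurable_compose[OF measurable_rotate_codebook] Q e unfolding random_encoder_def by blast
    ultimately show ?thesis
      unfolding g_def by measurable
  qed
  have "g (rotate_codebook A u) = ennreal (\<Sum>m\<in>UNIV. (norm (u m - e))\<^sup>2 * Q e u m)" for u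
  proof -
    have "norm (A *v u m - v) = norm (u m - e)" for m
      using norm_orthogonal_matrix_mult[OF A(1), of "u m - e"] A(2)
      by (simp add: matrix_vector_mult_diff_distrib)
    moreover have "rotate_codebook (transpose A) (rotate_codebook A u) = u"
      using transpose_orthogonal_matrix_mult[OF A(1)] by (simp add: rotate_codebook_def)
    ultimately show ?thesis
      by (simp add: g_def rotate_codebook_def)
  qed
  then have "err_at e Q P = (\<integral>\<^sup>+ u. g (rotate_codebook A u) \<partial>P)"
    by (simp add: err_at_def)
  also have "\<dots> = err_at v (transported_encoder e Q) P"
    using nn_integral_rotate_codebook[OF P A(1) g]
    by (simp add: err_at_def g_def transported_encoder_def A_def)
  finally show ?thesis ..
qed

theorem lemma4:
  fixes P :: "('m::finite \<Rightarrow> real^'d) measure"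
    and Q :: "real^'d \<Rightarrow> ('m \<Rightarrow> real^'d) \<Rightarrow> 'm \<Rightarrow> real"
    and b :: nat and \<epsilon> :: real
  assumes "b \<ge> 1" and "CARD('m) = 2 ^ b" and "\<epsilon> > 0"
    and "codebook_dist P" and "rot_symmetric P"
    and "random_encoder Q" and "unbiased P Q" and "LDP \<epsilon> P Q"
  shows "\<exists>Q2 :: real^'d \<Rightarrow> ('m \<Rightarrow> real^'d) \<Rightarrow> 'm \<Rightarrow> real.
           random_encoder Q2 \<and> Err Q P \<ge> Err Q2 P \<and>
           (\<forall>v\<in>sphere 0 1. \<forall>v'\<in>sphere 0 1. err_at v Q2 P = err_at v' Q2 P)"
proof (intro exI conjI)
  define e :: "real^'d" where "e = axis undefined 1"
  have e: "e \<in> sphere 0 1"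
    by (simp add: e_def)
  have err: "err_at v (transported_encoder e Q) P = err_at e Q P" if "v \<in> sphere 0 1" for v
    using err_at_transported_encoder[OF assms(4,5,6) e that] .
  show "random_encoder (transported_encoder e Q)"
    using random_encoder_transported_encoder[OF assms(6) e] .
  show "Err (transported_encoder e Q) P \<le> Err Q P"
    unfolding Err_def using e by (auto simp: err intro!: SUP_least SUP_upper)
  show "\<forall>v\<in>sphere 0 1. \<forall>v'\<in>sphere 0 1. err_at v (transported_encoder e Q) P = err_at v' (transported_encoder e Q) P"
    by (simp add: err)
qed

end
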